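(* Let $(S_n)_{n\ge1}$ be a sequence in $\mathcal S$ satisfying infill asymptotics with respect to $(S^*_m)_{m=1}^M$, let $(a_t)_{t\ge1}$ be positive with $a_t\to0$, and let $(k_N)_{N\ge1}$ be the adaptive number-of-neighbors sequence. Then (1) $\lim_{N\to\infty}k_N=\infty$, and (2) $\lim_{N\to\infty}R_{N,k_N}=0$.
   Context: $(\mathcal S,d)$ is a metric space and $S^*_1,\dots,S^*_M\in\mathcal S$ are fixed target locations. Infill asymptotics: for every $m$ and every open $U\ni S^*_m$, infinitely many $n$ satisfy $S_n\in U$. For $t\le N$, $R_{N,t}=\max_{1\le m\le M}\max\{d(S^*_m,S_n):n\le N,\ S_n \text{ is among the } t \text{ nearest neighbors of } S^*_m \text{ in } \{S_1,\dots,S_N\}\}$ (ties broken uniformly at random). Adaptive sequence: $k_1=1$ and $k_{N+1}=k_N+1$ if $R_{N+1,k_N+1}\le a_{k_N}$, otherwise $k_{N+1}=k_N$. *)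

theory Defs
  imports "HOL-Analysis.Analysis"
begin

text \<open>Indices are 1-based: observations S 1, S 2, ..., targets Sstar 1, ..., Sstar M.\<close>

text \<open>A is a valid choice of the t nearest neighbours (by index) of target x among
  S 1, ..., S N, for some tie-breaking.\<close>
definition is_knn :: "(nat \<Rightarrow> 'a::metric_space) \<Rightarrow> 'a \<Rightarrow> nat \<Rightarrow> nat \<Rightarrow> nat set \<Rightarrow> bool" where
  "is_knn S x N t A \<longleftrightarrow> A \<subseteq> {1..N} \<and> card A = t \<and>
     (\<forall>n\<in>A. \<forall>n'\<in>{1..N} - A. dist x (S n) \<le> dist x (S n'))"

definition infill :: "(nat \<Rightarrow> 'a::metric_space) \<Rightarrow> (nat \<Rightarrow> 'a) \<Rightarrow> nat \<Rightarrow> bool" where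
  "infill S Sstar M \<longleftrightarrow> (\<forall>m\<in>{1..M}. \<forall>U. open U \<and> Sstar m \<in> U \<longrightarrow>
      infinite {n. n \<ge> 1 \<and> S n \<in> U})"

text \<open>R_{N,t}, relative to a tie-breaking selection nn m N t of the t nearest neighbours
  of Sstar m among S 1..S N.\<close>
definition Rdist :: "(nat \<Rightarrow> 'a::metric_space) \<Rightarrow> (nat \<Rightarrow> 'a) \<Rightarrow> nat \<Rightarrow>
    (nat \<Rightarrow> nat \<Rightarrow> nat \<Rightarrow> nat set) \<Rightarrow> nat \<Rightarrow> nat \<Rightarrow> real" where
  "Rdist S Sstar M nn N t =
     Max {dist (Sstar m) (S n) | m n. m \<in> {1..M} \<and> n \<in> nn m N t}"

end

theory Submission
  imports Defs
begin

text \<open>For fixed t, the inequality R(N,t) <= r says that every target has at least t sample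
  points within distance r, and this stays true as N grows. Infill asymptotics makes it true
  eventually for every t and every r > 0, so the adaptive rule never stalls and k(N) tends to
  infinity. Between two increases of k, the radius R(N,k(N)) therefore stays below the threshold
  a(k(N) - 1) met at the last increase, and a(t) tends to 0.\<close>

definition count_in_cball :: "(nat \<Rightarrow> 'a::metric_space) \<Rightarrow> 'a \<Rightarrow> real \<Rightarrow> nat \<Rightarrow> nat" where
  "count_in_cball S x r N = card {n \<in> {1..N}. S n \<in> cball x r}"

lemma count_in_cball_mono:
  assumes "N \<le> N'"
  shows "count_in_cball S x r N \<le> count_in_cball S x r N'"
  unfolding count_in_cball_def using assms by (intro card_mono) auto

lemma eventually_count_in_cball_ge:
  assumes "infinite {n. 1 \<le> n \<and> S n \<in> cball x r}"
  shows "\<forall>\<^sub>F N in sequentially. K \<le> count_in_cball S x r N"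
proof -
  obtain B where B: "B \<subseteq> {n. 1 \<le> n \<and> S n \<in> cball x r}" "finite B" "card B = K"
    using infinite_arbitrarily_large[OF assms] by blast
  obtain N0 where N0: "\<forall>n\<in>B. n \<le> N0"
    using B(2) finite_nat_set_iff_bounded_le by blast
  have "K \<le> count_in_cball S x r N" if "N0 \<le> N" for N
  proof -
    have "B \<subseteq> {n \<in> {1..N}. S n \<in> cball x r}" using B(1) N0 that by fastforce
    then have "card B \<le> count_in_cball S x r N" unfolding count_in_cball_def by (intro card_mono) auto
    then show ?thesis using B(3) by simp
  qed
  then show ?thesis unfolding eventually_sequentially by blast
qed

lemma infill_eventually_count_in_cball_ge:
  assumes "infill S Sstar M" and "0 < r"
  shows "\<forall>\<^sub>F N in sequentially. \<forall>m\<in>{1..M}. K \<le> count_in_cball S (Sstar m) r N"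
proof (rule eventually_ball_finite[OF finite_atLeastAtMost], rule ballI)
  fix m assume "m \<in> {1..M}"
  moreover have "open (ball (Sstar m) r) \<and> Sstar m \<in> ball (Sstar m) r" using \<open>0 < r\<close> by simp
  ultimately have "infinite {n. 1 \<le> n \<and> S n \<in> ball (Sstar m) r}"
    using assms(1) unfolding infill_def by blast
  then have "infinite {n. 1 \<le> n \<and> S n \<in> cball (Sstar m) r}"
    by (rule infinite_super[rotated]) auto
  then show "\<forall>\<^sub>F N in sequentially. K \<le> count_in_cball S (Sstar m) r N"
    by (rule eventually_count_in_cball_ge)
qed

lemma is_knn_subset_cball_iff:
  assumes "is_knn S x N t A"
  shows "S ` A \<subseteq> cball x r \<longleftrightarrow> t \<le> count_in_cball S x r N"
proof
  assume "S ` A \<subseteq> cball x r"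
  then have "A \<subseteq> {n \<in> {1..N}. S n \<in> cball x r}" using assms unfolding is_knn_def by auto
  then have "card A \<le> count_in_cball S x r N" unfolding count_in_cball_def by (intro card_mono) auto
  then show "t \<le> count_in_cball S x r N" using assms unfolding is_knn_def by simp
next
  assume count: "t \<le> count_in_cball S x r N"
  show "S ` A \<subseteq> cball x r"
  proof (rule ccontr)
    assume "\<not> S ` A \<subseteq> cball x r"
    then obtain n where n: "n \<in> A" "S n \<notin> cball x r" by blast
    have "finite A" using assms unfolding is_knn_def using finite_subset by blast
    \<comment> \<open>every point in the ball is nearer than the far neighbour n, hence also a chosen neighbour\<close>
    have "{i \<in> {1..N}. S i \<in> cball x r} \<subseteq> A - {n}"
      using assms n unfolding is_knn_def by force
    then have "count_in_cball S x r N \<le> card (A - {n})"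
      unfolding count_in_cball_def using \<open>finite A\<close> by (simp add: card_mono)
    also have "\<dots> < card A" using \<open>finite A\<close> n(1) by (rule card_Diff1_less)
    finally show False using count assms unfolding is_knn_def by simp
  qed
qed

lemma Rdist_le_iff:
  assumes "1 \<le> M" "1 \<le> t"
    and valid: "\<And>m. m \<in> {1..M} \<Longrightarrow> is_knn S (Sstar m) N t (nn m N t)"
  shows "Rdist S Sstar M nn N t \<le> r \<longleftrightarrow> (\<forall>m\<in>{1..M}. t \<le> count_in_cball S (Sstar m) r N)"
proof -
  let ?D = "{dist (Sstar m) (S n) | m n. m \<in> {1..M} \<and> n \<in> nn m N t}"
  have D_image: "?D = (\<lambda>(m, n). dist (Sstar m) (S n)) ` (SIGMA m:{1..M}. nn m N t)" by fastforce
  have "(SIGMA m:{1..M}. nn m N t) \<subseteq> {1..M} \<times> {1..N}"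
    using valid unfolding is_knn_def by blast
  then have "finite (SIGMA m:{1..M}. nn m N t)" by (rule finite_subset) simp
  then have "finite ?D" unfolding D_image by (rule finite_imageI)
  moreover have "card (nn 1 N t) = t" using valid[of 1] \<open>1 \<le> M\<close> unfolding is_knn_def by simp
  then have "nn 1 N t \<noteq> {}" using \<open>1 \<le> t\<close> by auto
  then have "?D \<noteq> {}" using \<open>1 \<le> M\<close> by fastforce
  ultimately have "Rdist S Sstar M nn N t \<le> r \<longleftrightarrow> (\<forall>d\<in>?D. d \<le> r)"
    unfolding Rdist_def by (rule Max_le_iff)
  also have "\<dots> \<longleftrightarrow> (\<forall>m\<in>{1..M}. \<forall>n\<in>nn m N t. dist (Sstar m) (S n) \<le> r)" by blast
  also have "\<dots> \<longleftrightarrow> (\<forall>m\<in>{1..M}. S ` nn m N t \<subseteq> cball (Sstar m) r)" by (simp add: image_subset_iff)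
  finally show ?thesis using is_knn_subset_cball_iff[OF valid] by blast
qed

lemma Rdist_nonneg:
  assumes "1 \<le> M" "1 \<le> t"
    and "\<And>m. m \<in> {1..M} \<Longrightarrow> is_knn S (Sstar m) N t (nn m N t)"
  shows "0 \<le> Rdist S Sstar M nn N t"
proof (rule ccontr)
  assume neg: "\<not> 0 \<le> Rdist S Sstar M nn N t"
  \<comment> \<open>a closed ball of negative radius contains no points\<close>
  have "count_in_cball S (Sstar 1) (Rdist S Sstar M nn N t) N = 0"
    using neg unfolding count_in_cball_def by simp
  moreover have "t \<le> count_in_cball S (Sstar 1) (Rdist S Sstar M nn N t) N"
    using Rdist_le_iff[of M t S Sstar N nn "Rdist S Sstar M nn N t"] assms by auto
  ultimately show False using assms(2) by simp
qed

lemma Rdist_le_Suc: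
  assumes "1 \<le> M" "1 \<le> t" "t \<le> N"
    and valid: "\<And>m N t. m \<in> {1..M} \<Longrightarrow> 1 \<le> t \<Longrightarrow> t \<le> N \<Longrightarrow> is_knn S (Sstar m) N t (nn m N t)"
    and "Rdist S Sstar M nn N t \<le> r"
  shows "Rdist S Sstar M nn (Suc N) t \<le> r"
proof -
  have "\<forall>m\<in>{1..M}. t \<le> count_in_cball S (Sstar m) r N"
    using Rdist_le_iff[of M t S Sstar N nn r, OF assms(1,2) valid[OF _ assms(2,3)]] assms(5) by blast
  then have "\<forall>m\<in>{1..M}. t \<le> count_in_cball S (Sstar m) r (Suc N)"
    using count_in_cball_mono[of N "Suc N" S _ r] by (meson le_SucI order.refl order.trans)
  moreover have "t \<le> Suc N" using assms(3) by simp
  ultimately show ?thesis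
    using Rdist_le_iff[of M t S Sstar "Suc N" nn r, OF assms(1,2) valid[OF _ assms(2)]] by blast
qed

lemma infill_eventually_Rdist_le:
  assumes "1 \<le> M" "1 \<le> t" "0 < r" "infill S Sstar M"
    and valid: "\<And>m N t. m \<in> {1..M} \<Longrightarrow> 1 \<le> t \<Longrightarrow> t \<le> N \<Longrightarrow> is_knn S (Sstar m) N t (nn m N t)"
  shows "\<forall>\<^sub>F N in sequentially. Rdist S Sstar M nn N t \<le> r"
  using eventually_conj[OF eventually_ge_at_top[of t]
      infill_eventually_count_in_cball_ge[OF assms(4,3), of t]]
proof eventually_elim
  case (elim N)
  then show ?case using Rdist_le_iff[of M t S Sstar N nn r, OF assms(1,2) valid[OF _ assms(2)]] by blast
qed

locale adaptive_neighbour_count =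
  fixes R :: "nat \<Rightarrow> nat \<Rightarrow> real" and a :: "nat \<Rightarrow> real" and k :: "nat \<Rightarrow> nat"
  assumes k_1: "k 1 = 1"
    and k_step: "\<And>N. 1 \<le> N \<Longrightarrow> k (N + 1) = (if R (N + 1) (k N + 1) \<le> a (k N) then k N + 1 else k N)"
begin

lemma k_bounds: "1 \<le> N \<Longrightarrow> 1 \<le> k N \<and> k N \<le> N"
proof (induction N rule: dec_induct)
  case base then show ?case using k_1 by simp
next
  case (step n) then show ?case using k_step[of n] by simp
qed

lemma k_mono:
  assumes "1 \<le> N" "N \<le> N'"
  shows "k N \<le> k N'"
  using assms(2)
proof (induction N' rule: dec_induct)
  case (step n) then show ?case using k_step[of n] assms(1) by simp
qed simp

lemma k_eventually_increases:
  assumes accept: "\<And>K. 1 \<le> K \<Longrightarrow> \<forall>\<^sub>F N in sequentially. R (N + 1) (K + 1) \<le> a K"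
    and "1 \<le> N"
  shows "\<exists>N'\<ge>N. k N < k N'"
proof -
  have "\<forall>\<^sub>F N' in sequentially. N \<le> N' \<and> R (N' + 1) (k N + 1) \<le> a (k N)"
    using eventually_conj[OF eventually_ge_at_top[of N] accept[of "k N"]] k_bounds[OF \<open>1 \<le> N\<close>] by simp
  then obtain N' where "N \<le> N'" and accepted: "R (N' + 1) (k N + 1) \<le> a (k N)"
    unfolding eventually_sequentially by blast
  have "k N \<le> k N'" using k_mono \<open>1 \<le> N\<close> \<open>N \<le> N'\<close> .
  then consider "k N < k N'" | "k N' = k N" by linarith
  then show ?thesis
  proof cases
    case 2
    then have "k (N' + 1) = k N + 1" using k_step[of N'] accepted \<open>1 \<le> N\<close> \<open>N \<le> N'\<close> by simp
    then show ?thesis using \<open>N \<le> N'\<close> by (intro exI[of _ "N' + 1"]) simp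
  qed (use \<open>N \<le> N'\<close> in blast)
qed

lemma filterlim_k_at_top:
  assumes "\<And>K. 1 \<le> K \<Longrightarrow> \<forall>\<^sub>F N in sequentially. R (N + 1) (K + 1) \<le> a K"
  shows "filterlim k at_top sequentially"
proof -
  have "\<exists>N\<ge>1. j \<le> k N" for j
  proof (induction j)
    case (Suc j)
    then obtain N where "1 \<le> N" "j \<le> k N" by blast
    moreover obtain N' where "N \<le> N'" "k N < k N'"
      using k_eventually_increases[OF assms \<open>1 \<le> N\<close>] by blast
    ultimately have "1 \<le> N' \<and> Suc j \<le> k N'" by linarith
    then show ?case by blast
  qed auto
  then have "\<exists>N. \<forall>n\<ge>N. Z \<le> k n" for Z
    using k_mono by (meson order.trans)
  then show ?thesis unfolding filterlim_at_top eventually_sequentially by blast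
qed

lemma R_k_le_a_previous:
  assumes R_Suc: "\<And>N t r. 1 \<le> t \<Longrightarrow> t \<le> N \<Longrightarrow> R N t \<le> r \<Longrightarrow> R (N + 1) t \<le> r"
  shows "1 \<le> N \<Longrightarrow> 2 \<le> k N \<Longrightarrow> R N (k N) \<le> a (k N - 1)"
proof (induction N rule: dec_induct)
  case base then show ?case using k_1 by simp
next
  case (step n)
  show ?case
  proof (cases "R (n + 1) (k n + 1) \<le> a (k n)")
    case True then show ?thesis using k_step[of n] step(1) by simp
  next
    case False
    then have "k (n + 1) = k n" using k_step[of n] step(1) by simp
    then show ?thesis using step R_Suc[of "k n" n] k_bounds[of n] by simp
  qed
qed

lemma R_k_tendsto_0:
  assumes accept: "\<And>K. 1 \<le> K \<Longrightarrow> \<forall>\<^sub>F N in sequentially. R (N + 1) (K + 1) \<le> a K"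
    and R_Suc: "\<And>N t r. 1 \<le> t \<Longrightarrow> t \<le> N \<Longrightarrow> R N t \<le> r \<Longrightarrow> R (N + 1) t \<le> r"
    and R_nonneg: "\<And>N t. 1 \<le> t \<Longrightarrow> t \<le> N \<Longrightarrow> 0 \<le> R N t"
    and a_lim: "a \<longlonglongrightarrow> 0"
  shows "(\<lambda>N. R N (k N)) \<longlonglongrightarrow> 0"
proof (rule tendsto_sandwich)
  show "\<forall>\<^sub>F N in sequentially. 0 \<le> R N (k N)"
    using eventually_ge_at_top[of 1] by eventually_elim (use R_nonneg k_bounds in blast)
  have k_lim: "filterlim k at_top sequentially" using filterlim_k_at_top[OF accept] .
  show "\<forall>\<^sub>F N in sequentially. R N (k N) \<le> a (k N - 1)"
    using eventually_conj[OF k_lim[unfolded filterlim_at_top, rule_format, of 2] eventually_ge_at_top[of 1]]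
    by eventually_elim (use R_k_le_a_previous[OF R_Suc] in blast)
  show "(\<lambda>N. a (k N - 1)) \<longlonglongrightarrow> 0"
    using filterlim_compose[OF a_lim filterlim_compose[OF filterlim_minus_const_nat_at_top k_lim]]
    by (simp add: o_def)
qed simp

end

theorem propositionD2:
  fixes S Sstar :: "nat \<Rightarrow> 'a::metric_space"
    and M :: nat
    and a :: "nat \<Rightarrow> real"
    and nn :: "nat \<Rightarrow> nat \<Rightarrow> nat \<Rightarrow> nat set"
    and k :: "nat \<Rightarrow> nat"
  assumes M_pos: "M \<ge> 1"
    and infill: "infill S Sstar M"
    and nn_valid: "\<And>m N t. m \<in> {1..M} \<Longrightarrow> 1 \<le> t \<Longrightarrow> t \<le> N \<Longrightarrow>
                      is_knn S (Sstar m) N t (nn m N t)"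
    and a_pos: "\<And>t. t \<ge> 1 \<Longrightarrow> a t > 0"
    and a_lim: "a \<longlonglongrightarrow> 0"
    and k_1: "k 1 = 1"
    and k_step: "\<And>N. N \<ge> 1 \<Longrightarrow> k (N + 1) =
                   (if Rdist S Sstar M nn (N + 1) (k N + 1) \<le> a (k N) then k N + 1 else k N)"
  shows "filterlim k at_top sequentially \<and>
         (\<lambda>N. Rdist S Sstar M nn N (k N)) \<longlonglongrightarrow> 0"
proof -
  interpret adaptive_neighbour_count "Rdist S Sstar M nn" a k
    using k_1 k_step by unfold_locales
  have accept: "\<forall>\<^sub>F N in sequentially. Rdist S Sstar M nn (N + 1) (K + 1) \<le> a K" if "1 \<le> K" for K
    using infill_eventually_Rdist_le[OF M_pos _ a_pos[OF that] infill nn_valid, of "K + 1"]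
      eventually_sequentially_Suc[of "\<lambda>N. Rdist S Sstar M nn N (K + 1) \<le> a K"] by simp
  have R_Suc: "Rdist S Sstar M nn (N + 1) t \<le> r"
    if "1 \<le> t" "t \<le> N" "Rdist S Sstar M nn N t \<le> r" for N t r
    using Rdist_le_Suc[OF M_pos that(1,2) nn_valid that(3)] by simp
  have R_nonneg: "0 \<le> Rdist S Sstar M nn N t" if "1 \<le> t" "t \<le> N" for N t
    using Rdist_nonneg[of M t S Sstar N nn, OF M_pos that(1) nn_valid[OF _ that]] .
  show ?thesis
    using filterlim_k_at_top[OF accept] R_k_tendsto_0[OF accept R_Suc R_nonneg a_lim] by blast
qed

end
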